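(* There is a function $C(t,\epsilon)$ such that the following holds for every positive integer $t$ and every $\epsilon\in(0,1)$: let $G$ be a connected balanced bipartite graph with parts $X,Y$ each of order $n$, with $\delta(G)\geq 3C(t,\epsilon)$ and with no induced $S_{t,t}$. Then for any two vertices $a,b$ in the same part of $G$ there is a vertex $c$ in that same part such that $|N(a)\setminus N(c)|\leq \epsilon|N(a)|$ and $|N(b)\setminus N(c)|\leq \epsilon|N(b)|$.
   Context: For positive integers $a,b$, the biclaw $S_{a,b}$ is the graph with vertex set $\{x,x_1,\dots,x_a,y,y_1,\dots,y_b\}$ and edges $xy$, $xy_1,\dots,xy_b$, $yx_1,\dots,yx_a$; "no induced $S_{t,t}$" means no induced subgraph isomorphic to $S_{t,t}$. $N(v)$ is the neighbourhood of $v$ and $\delta(G)$ the minimum degree. *)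

theory Defs
  imports Complex_Main
begin

definition simple_graph :: "'a set \<Rightarrow> ('a \<Rightarrow> 'a \<Rightarrow> bool) \<Rightarrow> bool" where
  "simple_graph V E \<longleftrightarrow> finite V \<and> (\<forall>u v. E u v \<longrightarrow> u \<in> V \<and> v \<in> V)
     \<and> (\<forall>u v. E u v \<longrightarrow> E v u) \<and> (\<forall>u. \<not> E u u)"

definition nbhd :: "'a set \<Rightarrow> ('a \<Rightarrow> 'a \<Rightarrow> bool) \<Rightarrow> 'a \<Rightarrow> 'a set" where
  "nbhd V E v = {u \<in> V. E v u}"

definition connected_graph :: "'a set \<Rightarrow> ('a \<Rightarrow> 'a \<Rightarrow> bool) \<Rightarrow> bool" where
  "connected_graph V E \<longleftrightarrow> (\<forall>u\<in>V. \<forall>v\<in>V. E\<^sup>*\<^sup>* u v)"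

definition balanced_bipartite ::
  "'a set \<Rightarrow> ('a \<Rightarrow> 'a \<Rightarrow> bool) \<Rightarrow> 'a set \<Rightarrow> 'a set \<Rightarrow> nat \<Rightarrow> bool" where
  "balanced_bipartite V E X Y n \<longleftrightarrow> X \<inter> Y = {} \<and> X \<union> Y = V
     \<and> card X = n \<and> card Y = n
     \<and> (\<forall>u v. E u v \<longrightarrow> (u \<in> X \<and> v \<in> Y) \<or> (u \<in> Y \<and> v \<in> X))"

text \<open>The biclaw S_{a,b}: vertices x, y, x_1..x_a, y_1..y_b.\<close>
datatype bc_vertex = BX | BY | BXi nat | BYi nat

definition biclaw_verts :: "nat \<Rightarrow> nat \<Rightarrow> bc_vertex set" where
  "biclaw_verts a b = {BX, BY} \<union> BXi ` {1..a} \<union> BYi ` {1..b}"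

definition biclaw_adj0 :: "nat \<Rightarrow> nat \<Rightarrow> bc_vertex \<Rightarrow> bc_vertex \<Rightarrow> bool" where
  "biclaw_adj0 a b u v \<longleftrightarrow> (u = BX \<and> v = BY)
     \<or> (u = BX \<and> (\<exists>j\<in>{1..b}. v = BYi j))
     \<or> (u = BY \<and> (\<exists>i\<in>{1..a}. v = BXi i))"

definition biclaw_adj :: "nat \<Rightarrow> nat \<Rightarrow> bc_vertex \<Rightarrow> bc_vertex \<Rightarrow> bool" where
  "biclaw_adj a b u v \<longleftrightarrow> biclaw_adj0 a b u v \<or> biclaw_adj0 a b v u"

definition has_induced_biclaw ::
  "'a set \<Rightarrow> ('a \<Rightarrow> 'a \<Rightarrow> bool) \<Rightarrow> nat \<Rightarrow> nat \<Rightarrow> bool" where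
  "has_induced_biclaw V E a b \<longleftrightarrow> (\<exists>f. inj_on f (biclaw_verts a b)
     \<and> f ` biclaw_verts a b \<subseteq> V
     \<and> (\<forall>u\<in>biclaw_verts a b. \<forall>v\<in>biclaw_verts a b. E (f u) (f v) \<longleftrightarrow> biclaw_adj a b u v))"

end

(*
  Say that c delta-covers a if |N(a) - N(c)| <= delta |N(a)|. Excluding an induced S_{t,t}
  yields a counting bound: for an edge xy and W <= N(x) with |W| >= 2t/eta, fewer than
  t (2/eta)^t neighbours of y miss an eta-fraction of W. Indeed, from that many a greedy
  (Kovari-Sos-Turan type) selection finds t of them with t common non-neighbours in W, and
  together with x and y these span an induced S_{t,t} (only triangle-freeness is needed here).
  Once the minimum degree exceeds twice this bound, two vertices a, b that are delta-covered by
  vertices c1, c2 with a common neighbour y are simultaneously (delta + eta)-covered by some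
  further neighbour of y. So "a and b have a common delta-cover" is transitive up to a loss of
  eta, and walking through the connected bipartite graph gives any two vertices of one part a
  common 2 eta-cover, which lies in the same part.
*)

theory Submission
  imports Defs
begin

lemma card_le_card_add_if_subset_Un:
  assumes "finite B" "finite C" "A \<subseteq> B \<union> C"
  shows "card A \<le> card B + card C"
  using card_mono[of "B \<union> C" A] card_Un_le[of B C] assms by simp

lemma exists_popular_element:
  fixes M :: "'a \<Rightarrow> 'b \<Rightarrow> bool" and d :: real
  assumes "finite W" "W \<noteq> {}" "finite B" and deg: "\<forall>x\<in>B. d \<le> card {w\<in>W. M x w}"
  shows "\<exists>w\<in>W. d * card B \<le> real (card W) * card {x\<in>B. M x w}"
proof -
  define f where "f w = card {x\<in>B. M x w}" for w
  have "Max (f ` W) \<in> f ` W" using assms(1,2) by simp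
  then obtain w where w: "w \<in> W" "f w = Max (f ` W)" by (auto simp del: Max_in)
  then have max: "f w' \<le> f w" if "w' \<in> W" for w'
    using that assms(1) by simp
  have "d * card B \<le> (\<Sum>x\<in>B. real (card {w\<in>W. M x w}))"
    using sum_bounded_below[of B d "\<lambda>x. real (card {w\<in>W. M x w})"] deg
    by (simp add: mult.commute)
  also have "\<dots> = (\<Sum>w\<in>W. real (f w))"
    unfolding f_def of_nat_sum[symmetric]
    by (rule arg_cong[where f = real], rule sum_multicount_gen) (use assms in auto)
  also have "\<dots> \<le> real (card W) * f w"
    using sum_bounded_above[of W "\<lambda>w. real (f w)" "real (f w)"] max by simp
  finally show ?thesis using w(1) unfolding f_def by blast
qed

lemma greedy_complete_subpair:
  fixes M :: "'a \<Rightarrow> 'b \<Rightarrow> bool" and \<eta> :: real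
  assumes W: "finite W" and B: "finite B" and \<eta>: "0 < \<eta>" "\<eta> \<le> 1"
    and deg: "\<forall>x\<in>B. \<eta> * card W \<le> card {w\<in>W. M x w}"
    and j: "2 * real j \<le> \<eta> * card W"
  shows "\<exists>T B'. T \<subseteq> W \<and> card T = j \<and> B' \<subseteq> B \<and> (\<eta>/2)^j * card B \<le> card B'
    \<and> (\<forall>x\<in>B'. \<forall>w\<in>T. M x w)"
  using j
proof (induction j)
  case 0
  show ?case by (rule exI[of _ "{}"], rule exI[of _ B]) auto
next
  case (Suc j)
  then have "2 * real j \<le> \<eta> * card W" by simp
  then obtain T B' where T: "T \<subseteq> W" "card T = j" and B': "B' \<subseteq> B"
    and B'_large: "(\<eta>/2)^j * card B \<le> card B'" and complete: "\<forall>x\<in>B'. \<forall>w\<in>T. M x w"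
    using Suc.IH by blast
  have fin: "finite T" "finite (W - T)" "finite B'"
    using T(1) W B' B finite_subset by auto
  have "\<eta> * card W \<le> card W" using \<eta> by (simp add: mult_left_le_one_le)
  then have "card T < card W" using Suc.prems T(2) by simp
  then have "\<not> W \<subseteq> T" using card_mono[OF fin(1), of W] leD by blast
  moreover have "\<eta> * card W / 2 \<le> card {w\<in>W - T. M x w}" if "x \<in> B'" for x
  proof -
    have "card {w\<in>W. M x w} \<le> card {w\<in>W - T. M x w} + card T"
      using fin by (intro card_le_card_add_if_subset_Un) auto
    then have "real (card {w\<in>W. M x w}) \<le> card {w\<in>W - T. M x w} + j"
      unfolding T(2) of_nat_add[symmetric] of_nat_le_iff .
    moreover have "\<eta> * card W \<le> card {w\<in>W. M x w}" using deg that B' by blast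
    ultimately show ?thesis using Suc.prems by simp
  qed
  ultimately obtain w where w: "w \<in> W - T"
    and popular: "\<eta> * card W / 2 * card B' \<le> real (card (W - T)) * card {x\<in>B'. M x w}"
    using exists_popular_element[OF fin(2) _ fin(3), of "\<eta> * card W / 2"] by blast
  have "\<eta>/2 * card B' * card W = \<eta> * card W / 2 * card B'" by simp
  also have "\<dots> \<le> real (card (W - T)) * card {x\<in>B'. M x w}" by (rule popular)
  also have "\<dots> \<le> card {x\<in>B'. M x w} * real (card W)"
    using W by (subst mult.commute, intro mult_right_mono) (auto intro: card_mono)
  finally have "\<eta>/2 * card B' \<le> card {x\<in>B'. M x w}"
    using w W card_gt_0_iff by (subst (asm) mult_le_cancel_right_pos) auto
  moreover have "(\<eta>/2)^Suc j * card B \<le> \<eta>/2 * card B'"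
    using mult_left_mono[OF B'_large, of "\<eta>/2"] \<eta> by (simp add: mult.assoc)
  ultimately have "(\<eta>/2)^Suc j * card B \<le> card {x\<in>B'. M x w}" by linarith
  then show ?case
    using T B' complete w fin(1)
    by (intro exI[of _ "insert w T"] exI[of _ "{x\<in>B'. M x w}"]) auto
qed

locale graph =
  fixes V :: "'a set" and E :: "'a \<Rightarrow> 'a \<Rightarrow> bool"
  assumes simple: "simple_graph V E"
begin

abbreviation N :: "'a \<Rightarrow> 'a set" where
  "N v \<equiv> nbhd V E v"

lemma edge_sym: "E u v \<Longrightarrow> E v u"
  using simple unfolding simple_graph_def by blast

lemma edge_irrefl: "\<not> E u u"
  using simple unfolding simple_graph_def by blast

lemma edge_in_V: "E u v \<Longrightarrow> u \<in> V \<and> v \<in> V"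
  using simple unfolding simple_graph_def by blast

lemma in_N_iff: "u \<in> N v \<longleftrightarrow> E v u"
  using edge_in_V unfolding nbhd_def by blast

lemma finite_N: "finite (N v)"
  using simple unfolding simple_graph_def nbhd_def by simp

definition covers :: "real \<Rightarrow> 'a \<Rightarrow> 'a \<Rightarrow> bool" where
  "covers \<delta> a c \<longleftrightarrow> real (card (N a - N c)) \<le> \<delta> * card (N a)"

definition co_covered :: "real \<Rightarrow> 'a \<Rightarrow> 'a \<Rightarrow> bool" where
  "co_covered \<delta> a b \<longleftrightarrow> (\<exists>c. covers \<delta> a c \<and> covers \<delta> b c)"

lemma covers_refl: "0 \<le> \<delta> \<Longrightarrow> covers \<delta> a a"
  unfolding covers_def by simp

lemma covers_mono: "covers \<delta> a c \<Longrightarrow> \<delta> \<le> \<delta>' \<Longrightarrow> covers \<delta>' a c"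
  unfolding covers_def by (meson mult_right_mono of_nat_0_le_iff order_trans)

lemma co_covered_mono: "co_covered \<delta> a b \<Longrightarrow> \<delta> \<le> \<delta>' \<Longrightarrow> co_covered \<delta>' a b"
  unfolding co_covered_def using covers_mono by blast

lemma card_common_nbrs_ge:
  assumes "covers \<delta> a c"
  shows "(1 - \<delta>) * card (N a) \<le> card (N a \<inter> N c)"
  using assms card_Int_Diff[OF finite_N, of a "N c"] unfolding covers_def
  by (simp add: algebra_simps)

lemma covers_common_nbr:
  assumes "N m \<noteq> {}" "covers \<delta>\<^sub>1 m c\<^sub>1" "covers \<delta>\<^sub>2 m c\<^sub>2" "\<delta>\<^sub>1 + \<delta>\<^sub>2 < 1"
  shows "N m \<inter> N c\<^sub>1 \<inter> N c\<^sub>2 \<noteq> {}"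
proof
  assume "N m \<inter> N c\<^sub>1 \<inter> N c\<^sub>2 = {}"
  then have "N m \<subseteq> (N m - N c\<^sub>1) \<union> (N m - N c\<^sub>2)" by blast
  then have "card (N m) \<le> card (N m - N c\<^sub>1) + card (N m - N c\<^sub>2)"
    by (intro card_le_card_add_if_subset_Un) (auto simp: finite_N)
  also have "\<dots> \<le> (\<delta>\<^sub>1 + \<delta>\<^sub>2) * card (N m)"
    using assms(2,3) unfolding covers_def by (simp add: algebra_simps)
  also have "\<dots> < card (N m)"
    using assms(1,4) finite_N card_gt_0_iff by (simp add: mult_less_cancel_right2)
  finally show False by simp
qed

lemma covers_imp_common_nbr:
  assumes "N a \<noteq> {}" "covers \<delta> a c" "\<delta> < 1"
  shows "\<exists>y. E a y \<and> E c y"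
  using covers_common_nbr[OF assms(1) covers_refl[of 0 a] assms(2)] assms(3) in_N_iff by auto

lemma covers_compose:
  fixes \<eta> :: real
  assumes "covers \<delta> a c'" and "0 \<le> \<eta>"
    and "real (card (N a \<inter> N c' - N c)) \<le> \<eta> * card (N a \<inter> N c')"
  shows "covers (\<delta> + \<eta>) a c"
proof -
  have "N a - N c \<subseteq> (N a - N c') \<union> (N a \<inter> N c' - N c)" by blast
  then have "card (N a - N c) \<le> card (N a - N c') + card (N a \<inter> N c' - N c)"
    by (intro card_le_card_add_if_subset_Un) (auto simp: finite_N)
  moreover have "\<eta> * card (N a \<inter> N c') \<le> \<eta> * card (N a)"
    using assms(2) by (intro mult_left_mono) (auto intro: card_mono finite_N)
  ultimately show ?thesis
    using assms(1,3) unfolding covers_def by (simp add: algebra_simps)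
qed

end

locale triangle_free_graph = graph +
  assumes triangle_free: "E u v \<Longrightarrow> E v w \<Longrightarrow> \<not> E u w"
begin

lemma nbrs_not_adjacent: "u \<in> N w \<Longrightarrow> v \<in> N w \<Longrightarrow> \<not> E u v"
  using triangle_free edge_sym in_N_iff by blast

lemma induced_biclawI:
  assumes xy: "E x y" and T: "T \<subseteq> N x" "card T = t" and S: "S \<subseteq> N y" "card S = t"
    and no_edges: "\<forall>s\<in>S. \<forall>w\<in>T. \<not> E s w"
  shows "has_induced_biclaw V E t t"
proof -
  have fin: "finite S" "finite T" using S T finite_N finite_subset by blast+
  \<comment> \<open>All of S is adjacent to y, so y \<in> T would force S = {}, and then T = {} as |S| = |T|.\<close>
  have "S = {} \<longleftrightarrow> T = {}" using fin S(2) T(2) by auto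
  moreover have "y \<in> T \<Longrightarrow> S = {}" and "x \<in> S \<Longrightarrow> T = {}"
    using S(1) T(1) no_edges in_N_iff edge_sym by blast+
  ultimately have "y \<notin> T" "x \<notin> S" by blast+
  moreover have "x \<noteq> y" "x \<notin> T" "y \<notin> S"
    using xy edge_irrefl S(1) T(1) in_N_iff by blast+
  moreover have "S \<inter> T = {}"
    using S(1) T(1) xy nbrs_not_adjacent in_N_iff edge_sym by blast
  ultimately have distinct: "y \<notin> T" "x \<notin> S" "x \<noteq> y" "x \<notin> T" "y \<notin> S" "S \<inter> T = {}"
    by blast+
  obtain hS where hS: "bij_betw hS {1..t} S" using ex_bij_betw_nat_finite_1[OF fin(1)] S(2) by auto
  obtain hT where hT: "bij_betw hT {1..t} T" using ex_bij_betw_nat_finite_1[OF fin(2)] T(2) by auto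
  define f where "f v = (case v of BX \<Rightarrow> x | BY \<Rightarrow> y | BXi i \<Rightarrow> hS i | BYi j \<Rightarrow> hT j)" for v
  have img: "hS i \<in> S" "hT i \<in> T" if "1 \<le> i" "i \<le> t" for i
    using hS hT that bij_betwE by fastforce+
  have edges: "\<not> E u v" if "u \<in> insert x S" "v \<in> insert x S" for u v
    using that nbrs_not_adjacent S(1) xy in_N_iff edge_sym by blast
  have co_edges: "\<not> E u v" if "u \<in> insert y T" "v \<in> insert y T" for u v
    using that nbrs_not_adjacent T(1) xy in_N_iff by blast
  have x_edges: "E x w" "E w x" if "w \<in> insert y T" for w
    using that xy T(1) in_N_iff edge_sym by blast+
  have y_edges: "E y s" "E s y" if "s \<in> insert x S" for s
    using that xy S(1) in_N_iff edge_sym by blast+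
  have no_cross: "\<not> E s w" "\<not> E w s" if "s \<in> S" "w \<in> T" for s w
    using that no_edges edge_sym by blast+
  have adj: "E (f u) (f v) \<longleftrightarrow> biclaw_adj t t u v"
    if "u \<in> biclaw_verts t t" "v \<in> biclaw_verts t t" for u v
    using that
    by (cases u; cases v)
      (auto simp: f_def biclaw_verts_def biclaw_adj_def biclaw_adj0_def
        img edges co_edges x_edges y_edges no_cross)
  define g where "g z = (if z = x then BX else if z = y then BY
    else if z \<in> S then BXi (inv_into {1..t} hS z) else BYi (inv_into {1..t} hT z))" for z
  have "g (f u) = u" if "u \<in> biclaw_verts t t" for u
  proof (cases u)
    case (BXi i)
    then have "hS i \<in> S" "i \<in> {1..t}" using that img by (auto simp: biclaw_verts_def)
    then show ?thesis
      using BXi distinct bij_betw_inv_into_left[OF hS] by (auto simp: f_def g_def)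
  next
    case (BYi i)
    then have "hT i \<in> T" "i \<in> {1..t}" using that img by (auto simp: biclaw_verts_def)
    then show ?thesis
      using BYi distinct bij_betw_inv_into_left[OF hT] by (auto simp: f_def g_def)
  qed (use distinct in \<open>auto simp: f_def g_def\<close>)
  then have "inj_on f (biclaw_verts t t)" by (rule inj_on_inverseI)
  moreover have "f ` biclaw_verts t t \<subseteq> V"
    using img xy edge_in_V S(1) T(1) unfolding nbhd_def
    by (fastforce simp: f_def biclaw_verts_def)
  ultimately show ?thesis
    unfolding has_induced_biclaw_def using adj by blast
qed

end

lemma balanced_bipartite_edge_parts:
  assumes "balanced_bipartite V E X Y n" "P \<in> {X, Y}" "E u v"
  shows "u \<in> P \<longleftrightarrow> v \<notin> P"
  using assms unfolding balanced_bipartite_def by blast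

lemma balanced_bipartite_triangle_free:
  assumes "balanced_bipartite V E X Y n" "E u v" "E v w"
  shows "\<not> E u w"
proof
  assume "E u w"
  then have "u \<in> X \<longleftrightarrow> w \<notin> X" using balanced_bipartite_edge_parts[OF assms(1)] by simp
  moreover have "u \<in> X \<longleftrightarrow> v \<notin> X" "v \<in> X \<longleftrightarrow> w \<notin> X"
    using balanced_bipartite_edge_parts[OF assms(1)] assms(2,3) by simp_all
  ultimately show False by blast
qed

locale biclaw_free_graph = triangle_free_graph +
  fixes t :: nat
  assumes biclaw_free: "\<not> has_induced_biclaw V E t t"
begin

lemma card_nbrs_missing_fraction_less:
  fixes \<eta> :: real
  assumes xy: "E x y" and W: "W \<subseteq> N x" and \<eta>: "0 < \<eta>" "\<eta> \<le> 1"
    and W_large: "2 * real t \<le> \<eta> * card W"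
    and B: "B \<subseteq> N y" and missing: "\<forall>b\<in>B. \<eta> * card W \<le> card (W - N b)"
  shows "card B < t * (2/\<eta>)^t"
proof (rule ccontr)
  assume "\<not> ?thesis"
  then have B_large: "t * (2/\<eta>)^t \<le> card B" by simp
  have fin: "finite W" "finite B" using W B finite_N finite_subset by blast+
  have "W - N b = {w\<in>W. \<not> E b w}" for b using W in_N_iff by blast
  then have "\<forall>b\<in>B. \<eta> * card W \<le> card {w\<in>W. \<not> E b w}" using missing by simp
  from greedy_complete_subpair[OF fin \<eta> this W_large]
  obtain T B' where T: "T \<subseteq> W" "card T = t" and B': "B' \<subseteq> B"
    and B'_large: "(\<eta>/2)^t * card B \<le> card B'" and no_edges: "\<forall>b\<in>B'. \<forall>w\<in>T. \<not> E b w"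
    by blast
  have "real t = (\<eta>/2)^t * (t * (2/\<eta>)^t)"
    using \<eta> by (simp add: power_mult_distrib[symmetric])
  also have "\<dots> \<le> (\<eta>/2)^t * card B"
    using B_large \<eta> by (intro mult_left_mono) auto
  finally have "t \<le> card B'" using B'_large by linarith
  then obtain S where "S \<subseteq> B'" "card S = t" by (rule obtain_subset_with_card_n)
  then have "has_induced_biclaw V E t t"
    using induced_biclawI[OF xy _ T(2), of S] T(1) W B' B no_edges by blast
  then show False using biclaw_free by blast
qed

end

locale dense_biclaw_free_graph = biclaw_free_graph +
  fixes \<eta> D :: real
  assumes eta_pos: "0 < \<eta>" and eta_small: "\<eta> < 1/4"
    and D_pos: "0 < D" and min_degree: "\<forall>v\<in>V. D \<le> card (N v)"
    and D_ge_biclaw_bound: "2 * (t * (2/\<eta>)^t) \<le> D"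
    and D_ge_greedy_bound: "4 * t \<le> \<eta> * D"
begin

lemma N_nonempty:
  assumes "v \<in> V"
  shows "N v \<noteq> {}"
proof -
  have "0 < real (card (N v))" using min_degree assms D_pos by fastforce
  then show ?thesis by auto
qed

lemma exists_common_cover:
  assumes "E c\<^sub>1 y" "E c\<^sub>2 y" "W\<^sub>1 \<subseteq> N c\<^sub>1" "W\<^sub>2 \<subseteq> N c\<^sub>2"
    and "2 * real t \<le> \<eta> * card W\<^sub>1" "2 * real t \<le> \<eta> * card W\<^sub>2"
  shows "\<exists>c. card (W\<^sub>1 - N c) < \<eta> * card W\<^sub>1 \<and> card (W\<^sub>2 - N c) < \<eta> * card W\<^sub>2"
proof -
  define bad where "bad W = {c \<in> N y. \<eta> * card W \<le> card (W - N c)}" for W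
  have "card (bad W\<^sub>1) < t * (2/\<eta>)^t"
    by (rule card_nbrs_missing_fraction_less[OF assms(1,3) eta_pos _ assms(5)])
      (use eta_small in \<open>auto simp: bad_def\<close>)
  moreover have "card (bad W\<^sub>2) < t * (2/\<eta>)^t"
    by (rule card_nbrs_missing_fraction_less[OF assms(2,4) eta_pos _ assms(6)])
      (use eta_small in \<open>auto simp: bad_def\<close>)
  moreover have "card (bad W\<^sub>1 \<union> bad W\<^sub>2) \<le> card (bad W\<^sub>1) + card (bad W\<^sub>2)"
    by (rule card_Un_le)
  moreover have "D \<le> card (N y)" using min_degree edge_in_V assms(1) by blast
  ultimately have "card (bad W\<^sub>1 \<union> bad W\<^sub>2) < card (N y)"
    using D_ge_biclaw_bound by linarith
  moreover have "finite (bad W\<^sub>1 \<union> bad W\<^sub>2)" using finite_N unfolding bad_def by auto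
  ultimately have "\<not> N y \<subseteq> bad W\<^sub>1 \<union> bad W\<^sub>2"
    using card_mono[of "bad W\<^sub>1 \<union> bad W\<^sub>2" "N y"] by linarith
  then obtain c where "c \<in> N y" "c \<notin> bad W\<^sub>1" "c \<notin> bad W\<^sub>2" by blast
  then show ?thesis unfolding bad_def by (auto simp: not_le)
qed

lemma greedy_bound_le_common_nbrs:
  assumes "u \<in> V" "covers \<delta> u c" "\<delta> \<le> 1/2"
  shows "2 * real t \<le> \<eta> * card (N u \<inter> N c)"
proof -
  have "1/2 * D \<le> (1 - \<delta>) * card (N u)"
    using min_degree assms(1,3) D_pos by (intro mult_mono) auto
  also have "\<dots> \<le> card (N u \<inter> N c)" using card_common_nbrs_ge[OF assms(2)] .
  finally have "\<eta> * (1/2 * D) \<le> \<eta> * card (N u \<inter> N c)"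
    using eta_pos by (intro mult_left_mono) auto
  then show ?thesis using D_ge_greedy_bound by simp
qed

lemma co_covered_if_covers_common_nbr:
  assumes "a \<in> V" "b \<in> V" "\<delta> \<le> 1/2" "covers \<delta> a c\<^sub>1" "covers \<delta> b c\<^sub>2" "E c\<^sub>1 y" "E c\<^sub>2 y"
  shows "co_covered (\<delta> + \<eta>) a b"
proof -
  obtain c where "card (N a \<inter> N c\<^sub>1 - N c) < \<eta> * card (N a \<inter> N c\<^sub>1)"
    and "card (N b \<inter> N c\<^sub>2 - N c) < \<eta> * card (N b \<inter> N c\<^sub>2)"
    using exists_common_cover[OF assms(6,7) Int_lower2 Int_lower2
        greedy_bound_le_common_nbrs[OF assms(1,4,3)] greedy_bound_le_common_nbrs[OF assms(2,5,3)]]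
    by blast
  then have "covers (\<delta> + \<eta>) a c" "covers (\<delta> + \<eta>) b c"
    using covers_compose[OF assms(4)] covers_compose[OF assms(5)] eta_pos by simp_all
  then show ?thesis unfolding co_covered_def by blast
qed

lemma co_covered_if_common_nbr:
  assumes "a \<in> V" "b \<in> V" "E a y" "E b y"
  shows "co_covered \<eta> a b"
proof -
  have "co_covered (0 + \<eta>) a b"
    by (rule co_covered_if_covers_common_nbr[OF assms(1,2) _ covers_refl covers_refl assms(3,4)])
      simp_all
  then show ?thesis by simp
qed

lemma co_covered_trans:
  assumes "a \<in> V" "b \<in> V" "m \<in> V" "\<delta> < 1/2"
    and "co_covered \<delta> a m" "co_covered \<delta> m b"
  shows "co_covered (\<delta> + \<eta>) a b"
proof -
  obtain c\<^sub>1 c\<^sub>2 where c: "covers \<delta> a c\<^sub>1" "covers \<delta> m c\<^sub>1" "covers \<delta> b c\<^sub>2" "covers \<delta> m c\<^sub>2"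
    using assms(5,6) unfolding co_covered_def by blast
  have "N m \<inter> N c\<^sub>1 \<inter> N c\<^sub>2 \<noteq> {}"
    by (rule covers_common_nbr[OF N_nonempty[OF assms(3)] c(2) c(4)]) (use assms(4) in simp)
  then obtain y where "E c\<^sub>1 y" "E c\<^sub>2 y" using in_N_iff by blast
  then show ?thesis
    using co_covered_if_covers_common_nbr[OF assms(1,2) _ c(1) c(3)] assms(4) by simp
qed

lemma co_covered_extend:
  assumes a: "a \<in> V" and am: "co_covered (2 * \<eta>) a m" and "E m v" "E v b"
  shows "co_covered (2 * \<eta>) a b"
proof -
  have V: "m \<in> V" "b \<in> V" using assms(3,4) edge_in_V by blast+
  have "co_covered \<eta> m b"
    using co_covered_if_common_nbr[OF V assms(3) edge_sym[OF assms(4)]] .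
  then have "co_covered (2 * \<eta>) m b" using co_covered_mono eta_pos by simp
  then have "co_covered (2 * \<eta> + \<eta>) a b"
    using co_covered_trans[OF a V(2) V(1) _ am] eta_small by simp
  then obtain c where c: "covers (2 * \<eta> + \<eta>) a c" "covers (2 * \<eta> + \<eta>) b c"
    unfolding co_covered_def by blast
  obtain y\<^sub>1 where "E a y\<^sub>1" "E c y\<^sub>1"
    using covers_imp_common_nbr[OF N_nonempty[OF a] c(1)] eta_small by auto
  moreover obtain y\<^sub>2 where "E b y\<^sub>2" "E c y\<^sub>2"
    using covers_imp_common_nbr[OF N_nonempty[OF V(2)] c(2)] eta_small by auto
  ultimately have "c \<in> V" "co_covered \<eta> a c" "co_covered \<eta> c b"
    using co_covered_if_common_nbr a V(2) edge_in_V by blast+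
  \<comment> \<open>The detour through the common cover c brings the loss back from 3\<eta> to 2\<eta>.\<close>
  then have "co_covered (\<eta> + \<eta>) a b"
    by (intro co_covered_trans[OF a V(2)]) (use eta_small in simp_all)
  then show ?thesis by (simp only: mult_2)
qed

lemma co_covered_along_walk:
  assumes "a \<in> V" "E\<^sup>*\<^sup>* a v"
  shows "co_covered (2 * \<eta>) a v \<or> (\<exists>m. co_covered (2 * \<eta>) a m \<and> E m v)"
  using assms(2)
proof (induction rule: rtranclp_induct)
  case base
  have "covers (2 * \<eta>) a a" using covers_refl eta_pos by simp
  then show ?case unfolding co_covered_def by blast
next
  case (step v w)
  then show ?case using co_covered_extend assms(1) by blast
qed

lemma covers_same_part:
  assumes "balanced_bipartite V E X Y n" "P \<in> {X, Y}" "u \<in> V" "covers (2 * \<eta>) u c"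
  shows "u \<in> P \<longleftrightarrow> c \<in> P"
proof -
  obtain y where "E u y" "E c y"
    using covers_imp_common_nbr[OF N_nonempty assms(4)] assms(3) eta_small by auto
  then show ?thesis using balanced_bipartite_edge_parts[OF assms(1,2)] by blast
qed

lemma exists_cover_in_part:
  assumes bip: "balanced_bipartite V E X Y n" and conn: "connected_graph V E"
    and P: "P \<in> {X, Y}" "a \<in> P" "b \<in> P"
  shows "\<exists>c\<in>P. covers (2 * \<eta>) a c \<and> covers (2 * \<eta>) b c"
proof -
  have V: "a \<in> V" "b \<in> V" using bip P unfolding balanced_bipartite_def by blast+
  then have "E\<^sup>*\<^sup>* a b" using conn unfolding connected_graph_def by blast
  then consider "co_covered (2 * \<eta>) a b" | m where "co_covered (2 * \<eta>) a m" "E m b"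
    using co_covered_along_walk V(1) by blast
  then show ?thesis
  proof cases
    case 1
    then show ?thesis
      using covers_same_part[OF bip P(1) V(1)] P(2) unfolding co_covered_def by blast
  next
    case 2
    then obtain c where "covers (2 * \<eta>) a c" "covers (2 * \<eta>) m c" "m \<in> V"
      using edge_in_V unfolding co_covered_def by blast
    then have "m \<in> P" using covers_same_part[OF bip P(1)] V(1) P(2) by blast
    then show ?thesis
      using balanced_bipartite_edge_parts[OF bip P(1) \<open>E m b\<close>] P(3) by blast
  qed
qed

end

definition degree_bound :: "nat \<Rightarrow> real \<Rightarrow> real" where
  "degree_bound t \<epsilon> = t * (8/\<epsilon>)^t"

lemma dense_biclaw_free_graphI:
  fixes \<epsilon> :: real
  assumes "simple_graph V E" "balanced_bipartite V E X Y n" "\<not> has_induced_biclaw V E t t"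
    and t: "0 < t" and \<epsilon>: "0 < \<epsilon>" "\<epsilon> < 1"
    and "\<forall>v\<in>V. 3 * degree_bound t \<epsilon> \<le> card (nbhd V E v)"
  shows "dense_biclaw_free_graph V E t (\<epsilon>/4) (3 * degree_bound t \<epsilon>)"
proof unfold_locales
  have "1 \<le> 8/\<epsilon>" using \<epsilon> by simp
  then have "8/\<epsilon> \<le> (8/\<epsilon>)^t" using power_increasing[of 1 t "8/\<epsilon>"] t by simp
  then have "\<epsilon>/4 * (3 * (t * (8/\<epsilon>))) \<le> \<epsilon>/4 * (3 * degree_bound t \<epsilon>)"
    using \<epsilon> unfolding degree_bound_def by (intro mult_left_mono) auto
  moreover have "\<epsilon>/4 * (3 * (t * (8/\<epsilon>))) = 6 * t" using \<epsilon> by simp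
  ultimately show "4 * real t \<le> \<epsilon>/4 * (3 * degree_bound t \<epsilon>)" by linarith
  show "0 < 3 * degree_bound t \<epsilon>" using t \<epsilon> unfolding degree_bound_def by simp
  have "2 / (\<epsilon>/4) = 8/\<epsilon>" by simp
  then show "2 * (t * (2 / (\<epsilon>/4))^t) \<le> 3 * degree_bound t \<epsilon>"
    using \<epsilon> unfolding degree_bound_def by simp
  show "E u v \<Longrightarrow> E v w \<Longrightarrow> \<not> E u w" for u v w
    using balanced_bipartite_triangle_free[OF assms(2)] by blast
qed (use assms in simp_all)

theorem mainTheorem12:
  shows "\<exists>C :: nat \<Rightarrow> real \<Rightarrow> real. \<forall>t \<epsilon> (V :: nat set) E X Y n.
     t > 0 \<and> 0 < \<epsilon> \<and> \<epsilon> < 1 \<and>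
     simple_graph V E \<and> connected_graph V E \<and> balanced_bipartite V E X Y n \<and>
     (\<forall>v\<in>V. real (card (nbhd V E v)) \<ge> 3 * C t \<epsilon>) \<and>
     \<not> has_induced_biclaw V E t t
     \<longrightarrow> (\<forall>P\<in>{X, Y}. \<forall>a\<in>P. \<forall>b\<in>P. \<exists>c\<in>P.
           real (card (nbhd V E a - nbhd V E c)) \<le> \<epsilon> * real (card (nbhd V E a)) \<and>
           real (card (nbhd V E b - nbhd V E c)) \<le> \<epsilon> * real (card (nbhd V E b)))"
proof (intro exI[of _ degree_bound] allI impI ballI)
  fix t \<epsilon> and V :: "nat set" and E X Y n P a b
  assume H: "t > 0 \<and> 0 < \<epsilon> \<and> \<epsilon> < 1 \<and>
     simple_graph V E \<and> connected_graph V E \<and> balanced_bipartite V E X Y n \<and>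
     (\<forall>v\<in>V. real (card (nbhd V E v)) \<ge> 3 * degree_bound t \<epsilon>) \<and>
     \<not> has_induced_biclaw V E t t"
    and P: "P \<in> {X, Y}" "a \<in> P" "b \<in> P"
  then interpret dense_biclaw_free_graph V E t "\<epsilon>/4" "3 * degree_bound t \<epsilon>"
    by (intro dense_biclaw_free_graphI) auto
  obtain c where c: "c \<in> P" "covers (2 * (\<epsilon>/4)) a c" "covers (2 * (\<epsilon>/4)) b c"
    using exists_cover_in_part[OF _ _ P] H by blast
  moreover have "2 * (\<epsilon>/4) \<le> \<epsilon>" using H by simp
  ultimately show "\<exists>c\<in>P.
      real (card (nbhd V E a - nbhd V E c)) \<le> \<epsilon> * real (card (nbhd V E a)) \<and>
      real (card (nbhd V E b - nbhd V E c)) \<le> \<epsilon> * real (card (nbhd V E b))"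
    using covers_mono unfolding covers_def by blast
qed

end
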